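(* Let $X$ be an absolutely continuous random variable with PDF $f$, CDF $F$ and finite CIGF. Then, for $(\alpha,\beta)\in D_X$ with $\alpha>-1$ and $\beta>-1$, $$G_X(\alpha,\beta)=B(\alpha+1,\beta+1)\,\mathbb{E}[r(Y)],$$ where $Y\sim\mathrm{Beta}(\alpha+1,\beta+1)$ is independent of $X$, $r(Y)=[f(F^{-1}(Y))]^{-1}$, and $B(x,y)=\int_0^1t^{x-1}(1-t)^{y-1}dt$ is the Euler Beta function.
   Context: For a random variable $X$ with CDF $F$ and survival function $\overline F=1-F$, with $l=\inf\{x:F(x)>0\}$, $r=\sup\{x:\overline F(x)>0\}$, the CIGF is $G_X(\alpha,\beta)=\int_l^r [F(x)]^\alpha[\overline F(x)]^\beta\,dx$ on $D_X=\{(\alpha,\beta)\in\mathbb{R}^2: G_X(\alpha,\beta)<\infty\}$. The quantile function is $F^{-1}(u)=\sup\{x: F(x)\le u\}$, $u\in[0,1]$.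
   Formalization: The PDF f is also strictly positive at every x with l < x < r, so the support of X is the whole interval between l and r, with no gaps where f vanishes. Apart from conventions, each condition added here is assumed in the paper as well or is needed for the statement above to hold. *)

theory Defs
  imports "HOL-Probability.Probability"
begin

definition supp_left :: "(real \<Rightarrow> real) \<Rightarrow> ereal" where
  "supp_left F = Inf (ereal ` {x. F x > 0})"

definition supp_right :: "(real \<Rightarrow> real) \<Rightarrow> ereal" where
  "supp_right F = Sup (ereal ` {x. 1 - F x > 0})"

definition supp_interval :: "(real \<Rightarrow> real) \<Rightarrow> real set" where
  "supp_interval F = {x. supp_left F < ereal x \<and> ereal x < supp_right F}"

definition cigf :: "(real \<Rightarrow> real) \<Rightarrow> real \<Rightarrow> real \<Rightarrow> real" where
  "cigf F a b = (LINT x : supp_interval F | lborel. F x powr a * (1 - F x) powr b)"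

text \<open>Its domain D_X: the pairs for which the (nonnegative) integral is finite.\<close>
definition cigf_domain :: "(real \<Rightarrow> real) \<Rightarrow> (real \<times> real) set" where
  "cigf_domain F = {(a, b). set_integrable lborel (supp_interval F)
                              (\<lambda>x. F x powr a * (1 - F x) powr b)}"

definition quantile :: "(real \<Rightarrow> real) \<Rightarrow> real \<Rightarrow> real" where
  "quantile F u = Sup {x. F x \<le> u}"

definition beta_density :: "real \<Rightarrow> real \<Rightarrow> real \<Rightarrow> real" where
  "beta_density a b y =
     (if 0 < y \<and> y < 1 then y powr (a - 1) * (1 - y) powr (b - 1) / Beta a b else 0)"

end

theory Submission
  imports Defs
begin

(* Substitute u = F x. On the support (l, r) the CDF is continuous and strictly increasing, so
   F^-1 (F x) = x and the integrand F^alpha (1 - F)^beta equals f x * k (F x) with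
   k u = u^alpha (1 - u)^beta / f (F^-1 u). As F(X) is uniform on [0, 1], integrating
   f x * k (F x) gives the integral of k over (0, 1), which the Beta density turns into
   B(alpha + 1, beta + 1) E[r(Y)]. *)

locale continuous_real_distribution = real_distribution +
  assumes isCont_cdf_everywhere: "isCont (cdf M) x"
begin

lemma continuous_on_cdf: "continuous_on UNIV (cdf M)"
  using isCont_cdf_everywhere by (simp add: continuous_at_imp_continuous_on)

lemma
  assumes "0 < u" "u < 1"
  shows cdf_quantile: "cdf M (quantile (cdf M) u) = u"
    and cdf_le_iff_le_quantile: "cdf M x \<le> u \<longleftrightarrow> x \<le> quantile (cdf M) u"
proof -
  define A where "A = {x. cdf M x \<le> u}"
  define q where "q = quantile (cdf M) u"
  have "eventually (\<lambda>x. cdf M x < u) at_bot"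
    using cdf_lim_at_bot assms(1) by (rule order_tendstoD)
  then obtain b where "cdf M b < u"
    by (auto simp: eventually_at_bot_linorder)
  then have "A \<noteq> {}"
    by (auto simp: A_def intro: less_imp_le)
  have "eventually (\<lambda>x. u < cdf M x) at_top"
    using cdf_lim_at_top_prob assms(2) by (rule order_tendstoD)
  then obtain c where "\<And>x. c \<le> x \<Longrightarrow> u < cdf M x"
    by (auto simp: eventually_at_top_linorder)
  then have "bdd_above A"
    unfolding A_def bdd_above_def by (metis linorder_not_less mem_Collect_eq nle_le)
  have "closed A"
    unfolding A_def by (rule closed_Collect_le) (simp_all add: continuous_on_cdf)
  have "q \<in> A"
    unfolding q_def quantile_def A_def[symmetric]
    by (rule closed_contains_Sup) fact+
  have upper: "y \<le> q" if "y \<in> A" for y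
    unfolding q_def quantile_def A_def[symmetric] using that \<open>bdd_above A\<close> by (rule cSup_upper)
  have "u \<le> cdf M q"
  proof (rule tendsto_lowerbound)
    show "(cdf M \<longlongrightarrow> cdf M q) (at_right q)"
      using isCont_cdf_everywhere[of q] by (simp add: isCont_def filterlim_at_split)
    have "eventually (\<lambda>y. q < y) (at_right q)"
      by (rule eventually_at_right_less)
    then show "eventually (\<lambda>y. u \<le> cdf M y) (at_right q)"
      by eventually_elim (use upper in \<open>force simp: A_def not_le[symmetric]\<close>)
  qed simp
  then show cdf_q: "cdf M q = u"
    using \<open>q \<in> A\<close> by (simp add: A_def)
  show "cdf M x \<le> u \<longleftrightarrow> x \<le> q"
    using upper[of x] cdf_nondecreasing[of x q] by (auto simp: A_def cdf_q)
qed

lemma borel_measurable_cdf [measurable]: "cdf M \<in> borel_measurable borel"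
  by (rule borel_measurable_mono) (simp add: mono_def cdf_nondecreasing)

lemma mono_on_quantile: "mono_on {0<..<1} (quantile (cdf M))"
  by (rule mono_onI) (auto simp: cdf_le_iff_le_quantile[symmetric] cdf_quantile)

lemma borel_measurable_quantile: "quantile (cdf M) \<in> borel_measurable borel"
proof -
  let ?Q = "quantile (cdf M)"
  have below: "{x. cdf M x \<le> u} = {}" if "u < 0" for u
    using that cdf_nonneg by (auto simp: not_le intro: less_le_trans)
  have above: "{x. cdf M x \<le> u} = UNIV" if "1 \<le> u" for u
    using that cdf_bounded_prob by (auto intro: order_trans)
  (* For u < 0 and u >= 1 the quantile is the junk value Sup {} resp. Sup UNIV, about which
     nothing is known except that it does not depend on u. *)
  have piecewise: "?Q = (\<lambda>u. if u \<in> {0<..<1} then ?Q u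
                   else if u < 0 then ?Q (-1) else if u = 0 then ?Q 0 else ?Q 1)"
    by (auto simp: fun_eq_iff quantile_def below above not_less)
  have "{u. 0 < u \<and> u < 1} = {0<..<1::real}"
    by auto
  then have "?Q \<in> borel_measurable (restrict_space borel {u. 0 < u \<and> u < 1})"
    using borel_measurable_mono_on_fnc[OF mono_on_quantile] by simp
  then show ?thesis
    by (subst piecewise, subst measurable_If_restrict_space_iff)
       (auto intro: measurable_restrict_space1)
qed

lemma mem_supp_interval_cdf_iff:
  "x \<in> supp_interval (cdf M) \<longleftrightarrow> 0 < cdf M x \<and> cdf M x < 1"
proof
  assume "x \<in> supp_interval (cdf M)"
  then obtain y z where "0 < cdf M y" "y < x" "0 < 1 - cdf M z" "x < z"
    by (auto simp: supp_interval_def supp_left_def supp_right_def Inf_less_iff less_Sup_iff)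
  then show "0 < cdf M x \<and> cdf M x < 1"
    using cdf_nondecreasing[of y x] cdf_nondecreasing[of x z] by auto
next
  assume pos: "0 < cdf M x \<and> cdf M x < 1"
  have "eventually (\<lambda>y. 0 < cdf M y \<and> cdf M y < 1) (at x)"
    using isCont_cdf_everywhere[of x] pos unfolding isCont_def
    by (intro eventually_conj order_tendstoD) auto
  then obtain d where "0 < d"
    and d: "\<And>y. y \<noteq> x \<Longrightarrow> dist y x < d \<Longrightarrow> 0 < cdf M y \<and> cdf M y < 1"
    by (auto simp: eventually_at)
  then have "0 < cdf M (x - d/2)" "0 < 1 - cdf M (x + d/2)"
    by (auto simp: dist_real_def)
  then have "supp_left (cdf M) \<le> ereal (x - d/2)" "ereal (x + d/2) \<le> supp_right (cdf M)"
    by (auto simp: supp_left_def supp_right_def intro: Inf_lower Sup_upper)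
  with \<open>0 < d\<close> show "x \<in> supp_interval (cdf M)"
    unfolding supp_interval_def
    by (auto intro: le_less_trans[of _ "ereal (x - d/2)"] less_le_trans[of _ "ereal (x + d/2)"])
qed

lemma open_supp_interval_cdf: "open (supp_interval (cdf M))"
proof -
  have "supp_interval (cdf M) = cdf M -` {0<..<1}"
    by (auto simp: mem_supp_interval_cdf_iff)
  then show ?thesis
    using continuous_on_cdf by (simp add: open_vimage)
qed

lemma real_distribution_distr_cdf: "real_distribution (distr M borel (cdf M))"
  by (rule real_distribution_distr)
     (simp only: measurable_cong_sets[OF events_eq_borel refl] borel_measurable_cdf)

lemma cdf_distr_cdf: "cdf (distr M borel (cdf M)) u = max 0 (min 1 u)"
proof -
  interpret T: real_distribution "distr M borel (cdf M)"
    by (rule real_distribution_distr_cdf)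
  have cdf_T: "cdf (distr M borel (cdf M)) u = prob {x. cdf M x \<le> u}" for u
    by (subst cdf_def2, subst measure_distr)
       (auto simp: vimage_def measurable_cong_sets[OF events_eq_borel refl])
  have inner: "cdf (distr M borel (cdf M)) u = u" if "0 < u" "u < 1" for u
  proof -
    have "{x. cdf M x \<le> u} = {..quantile (cdf M) u}"
      using that by (auto simp: cdf_le_iff_le_quantile)
    then show ?thesis
      using cdf_quantile[OF that] by (simp add: cdf_T flip: cdf_def2)
  qed
  consider "u < 0" | "u = 0" | "0 < u \<and> u < 1" | "1 \<le> u"
    by linarith
  then show ?thesis
  proof cases
    case 1
    then have "{x. cdf M x \<le> u} = {}"
      using cdf_nonneg by (auto simp: not_le intro: less_le_trans)
    with 1 show ?thesis
      by (simp add: cdf_T)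
  next
    case 2
    have "cdf (distr M borel (cdf M)) 0 \<le> 0"
    proof (rule dense_ge_bounded[of 0 1])
      show "cdf (distr M borel (cdf M)) 0 \<le> w" if "0 < w" "w < 1" for w
        using that T.cdf_nondecreasing[of 0 w] by (simp add: inner)
    qed simp
    with 2 show ?thesis
      using T.cdf_nonneg[of 0] by simp
  next
    case 3
    then show ?thesis
      by (simp add: inner)
  next
    case 4
    then have "{x. cdf M x \<le> u} = space M"
      using cdf_bounded_prob by (auto intro: order_trans)
    with 4 show ?thesis
      by (simp only: cdf_T prob_space)
  qed
qed

lemma distr_cdf_eq_uniform: "distr M borel (cdf M) = uniform_measure lborel {0..1}"
proof (rule cdf_unique)
  show "real_distribution (uniform_measure lborel {0..1::real})"
    by (auto intro!: real_distribution.intro real_distribution_axioms.intro prob_space_uniform_measure)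
  have "cdf (uniform_measure lborel {0..1}) u = max 0 (min 1 u)" for u
  proof -
    have "{0..1} \<inter> {..u} = {0..min 1 u}"
      by auto
    then show ?thesis
      by (simp add: cdf_def measure_uniform_measure)
  qed
  then show "cdf (distr M borel (cdf M)) = cdf (uniform_measure lborel {0..1})"
    by (simp add: fun_eq_iff cdf_distr_cdf)
qed (rule real_distribution_distr_cdf)

lemma nn_integral_comp_cdf:
  assumes [measurable]: "k \<in> borel_measurable borel"
  shows "(\<integral>\<^sup>+x. k (cdf M x) \<partial>M) = (\<integral>\<^sup>+u\<in>{0..1}. k u \<partial>lborel)"
proof -
  have "(\<integral>\<^sup>+x. k (cdf M x) \<partial>M) = (\<integral>\<^sup>+u. k u \<partial>distr M borel (cdf M))"
    by (simp add: nn_integral_distr)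
  also have "\<dots> = (\<integral>\<^sup>+u\<in>{0..1}. k u \<partial>lborel)"
    by (simp add: distr_cdf_eq_uniform nn_integral_uniform_measure divide_ennreal_def)
  finally show ?thesis .
qed

end

lemma quantile_left_inverse_at:
  fixes F :: "real \<Rightarrow> real"
  assumes "\<And>z. x < z \<Longrightarrow> F x < F z"
  shows "quantile F (F x) = x"
  unfolding quantile_def
  by (rule cSup_eq_maximum) (use assms in \<open>auto simp: not_le[symmetric]\<close>)

locale real_density =
  fixes f :: "real \<Rightarrow> real"
  assumes real_distribution_density: "real_distribution (density lborel (\<lambda>x. ennreal (f x)))"
    and borel_measurable_density [measurable]: "f \<in> borel_measurable borel"
begin

abbreviation "D \<equiv> density lborel (\<lambda>x. ennreal (f x))"

sublocale continuous_real_distribution D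
proof (intro continuous_real_distribution.intro continuous_real_distribution_axioms.intro
    real_distribution_density)
  interpret real_distribution D
    by (rule real_distribution_density)
  fix x :: real
  have "AE y in lborel. y \<notin> {x}"
    by (rule AE_not_in) (simp add: countable_imp_null_set_lborel)
  then have "AE y in lborel. y \<in> {x} \<longrightarrow> ennreal (f y) = 0"
    by eventually_elim simp
  then have "{x} \<in> null_sets D"
    by (simp add: null_sets_density_iff)
  then show "isCont (cdf D) x"
    by (simp add: isCont_cdf measure_def null_setsD1)
qed

lemma cdf_density_less:
  assumes "x < z" and f_pos: "\<And>y. y \<in> {x<..<z} \<Longrightarrow> 0 < f y"
  shows "cdf D x < cdf D z"
proof -
  have "{x<..<z} \<notin> null_sets D"
  proof
    assume "{x<..<z} \<in> null_sets D"
    then have "AE y in lborel. y \<in> {x<..<z} \<longrightarrow> ennreal (f y) = 0"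
      by (simp add: null_sets_density_iff)
    then have "AE y in lborel. y \<notin> {x<..<z}"
      by eventually_elim (use f_pos in force)
    then have "{x<..<z} \<in> null_sets lborel"
      by (simp add: AE_iff_null_sets)
    with \<open>x < z\<close> show False
      by (simp add: null_sets_def)
  qed
  then have "0 < prob {x<..<z}"
    by (simp add: zero_less_measure_iff null_sets_def emeasure_eq_measure)
  also have "prob {x<..<z} \<le> prob {x<..z}"
    by (rule finite_measure_mono) auto
  also have "\<dots> = cdf D z - cdf D x"
    using \<open>x < z\<close> by (rule cdf_diff_eq[symmetric])
  finally show ?thesis
    by simp
qed

lemma quantile_cdf_density_left_inverse:
  assumes f_pos: "\<And>y. y \<in> supp_interval (cdf D) \<Longrightarrow> 0 < f y"
    and x: "x \<in> supp_interval (cdf D)"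
  shows "quantile (cdf D) (cdf D x) = x"
proof (rule quantile_left_inverse_at)
  obtain e where "0 < e" and e: "ball x e \<subseteq> supp_interval (cdf D)"
    using open_supp_interval_cdf x by (auto simp: open_contains_ball)
  fix z assume "x < z"
  define w where "w = min z (x + e)"
  have "{x<..<w} \<subseteq> supp_interval (cdf D)"
    using e by (force simp: w_def dist_real_def)
  then have "cdf D x < cdf D w"
    using \<open>x < z\<close> \<open>0 < e\<close> f_pos by (intro cdf_density_less) (auto simp: w_def)
  also have "cdf D w \<le> cdf D z"
    by (rule cdf_nondecreasing) (simp add: w_def)
  finally show "cdf D x < cdf D z" .
qed

lemma cigf_eq_integral_quantile:
  assumes f_pos: "\<And>x. x \<in> supp_interval (cdf D) \<Longrightarrow> 0 < f x"
    and dom: "(a, b) \<in> cigf_domain (cdf D)"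
  shows "cigf (cdf D) a b = enn2real (\<integral>\<^sup>+u\<in>{0<..<1}.
           ennreal (u powr a * (1 - u) powr b / f (quantile (cdf D) u)) \<partial>lborel)"
proof -
  define F where "F = cdf D"
  define S where "S = supp_interval F"
  define g where "g x = F x powr a * (1 - F x) powr b" for x
  define k where "k u = indicator {0<..<1} u * (u powr a * (1 - u) powr b / f (quantile F u))"
    for u :: real
  have [measurable]: "F \<in> borel_measurable borel" "quantile F \<in> borel_measurable borel"
    unfolding F_def by (rule borel_measurable_cdf borel_measurable_quantile)+
  have [measurable]: "k \<in> borel_measurable borel"
    unfolding k_def by measurable
  have "cigf F a b = enn2real (\<integral>\<^sup>+x. ennreal (indicator S x * g x) \<partial>lborel)"
    using dom unfolding F_def[symmetric] cigf_def cigf_domain_def set_lebesgue_integral_def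
      set_integrable_def
    by (subst integral_eq_nn_integral) (auto simp: S_def g_def)
  also have "(\<integral>\<^sup>+x. ennreal (indicator S x * g x) \<partial>lborel)
      = (\<integral>\<^sup>+x. ennreal (f x) * ennreal (k (F x)) \<partial>lborel)"
  proof (rule nn_integral_cong)
    fix x
    show "ennreal (indicator S x * g x) = ennreal (f x) * ennreal (k (F x))"
    proof (cases "x \<in> S")
      case True
      then have "0 < F x" "F x < 1" "quantile F (F x) = x" "0 < f x"
        using mem_supp_interval_cdf_iff quantile_cdf_density_left_inverse f_pos
        by (auto simp: S_def F_def)
      with True show ?thesis
        by (simp add: k_def g_def flip: ennreal_mult')
    next
      case False
      then have "F x \<notin> {0<..<1}"
        using mem_supp_interval_cdf_iff by (auto simp: S_def F_def)
      with False show ?thesis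
        by (simp add: k_def)
    qed
  qed
  also have "\<dots> = (\<integral>\<^sup>+x. ennreal (k (F x)) \<partial>D)"
    by (simp add: nn_integral_density)
  also have "\<dots> = (\<integral>\<^sup>+u\<in>{0..1}. ennreal (k u) \<partial>lborel)"
    unfolding F_def by (rule nn_integral_comp_cdf) measurable
  also have "\<dots> = (\<integral>\<^sup>+u\<in>{0<..<1}.
                      ennreal (u powr a * (1 - u) powr b / f (quantile F u)) \<partial>lborel)"
    by (rule nn_integral_cong) (auto simp: k_def indicator_def)
  finally show ?thesis
    unfolding F_def .
qed

end

lemma (in prob_space) expectation_beta_distributed:
  assumes Y: "distributed M lborel Y (\<lambda>y. ennreal (beta_density a b y))"
    and "0 < a" "0 < b"
    and [measurable]: "\<phi> \<in> borel_measurable borel" and "\<And>y. 0 \<le> \<phi> y"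
  shows "expectation (\<lambda>\<omega>. \<phi> (Y \<omega>)) = enn2real (\<integral>\<^sup>+y\<in>{0<..<1}.
           ennreal (y powr (a - 1) * (1 - y) powr (b - 1) * \<phi> y) \<partial>lborel) / Beta a b"
proof -
  have [measurable]: "Y \<in> borel_measurable M"
    using Y by (auto simp: distributed_def)
  have "0 < Beta a b"
    using assms by (simp add: Beta_def Gamma_real_pos)
  have "(\<integral>\<^sup>+\<omega>. ennreal (\<phi> (Y \<omega>)) \<partial>M)
      = (\<integral>\<^sup>+y. ennreal (beta_density a b y) * ennreal (\<phi> y) \<partial>lborel)"
    using distributed_nn_integral[OF Y] by simp
  also have "\<dots> = (\<integral>\<^sup>+y. ennreal (indicator {0<..<1} y
                      * (y powr (a - 1) * (1 - y) powr (b - 1) * \<phi> y))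
                    * ennreal (1 / Beta a b) \<partial>lborel)"
    using \<open>0 < Beta a b\<close>
    by (intro nn_integral_cong)
       (auto simp: beta_density_def indicator_def simp flip: ennreal_mult' ennreal_mult'')
  also have "\<dots> = (\<integral>\<^sup>+y\<in>{0<..<1}.
                      ennreal (y powr (a - 1) * (1 - y) powr (b - 1) * \<phi> y) \<partial>lborel)
                    * ennreal (1 / Beta a b)"
    by (subst nn_integral_multc) (auto simp: indicator_mult_ennreal mult.commute)
  finally show ?thesis
    using \<open>0 < Beta a b\<close> assms(5)
    by (simp add: integral_eq_nn_integral enn2real_mult)
qed

theorem proposition8:
  fixes M :: "'a measure" and X Y :: "'a \<Rightarrow> real" and f :: "real \<Rightarrow> real"
    and \<alpha> \<beta> :: real
  defines "F \<equiv> cdf (distr M borel X)"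
  assumes "prob_space M"
    and f_nonneg: "\<And>x. f x \<ge> 0"
    and f_meas: "f \<in> borel_measurable borel"
    and X_distr: "distributed M lborel X (\<lambda>x. ennreal (f x))"
    and f_pos: "\<And>x. x \<in> supp_interval F \<Longrightarrow> f x > 0"
    and dom: "(\<alpha>, \<beta>) \<in> cigf_domain F"
    and "\<alpha> > -1" and "\<beta> > -1"
    and Y_distr: "distributed M lborel Y (\<lambda>y. ennreal (beta_density (\<alpha> + 1) (\<beta> + 1) y))"
    and indep: "prob_space.indep_var M borel X borel Y"
  shows "cigf F \<alpha> \<beta> =
           Beta (\<alpha> + 1) (\<beta> + 1) *
           prob_space.expectation M (\<lambda>\<omega>. 1 / f (quantile F (Y \<omega>)))"
proof -
  interpret P: prob_space M by fact
  have "distr M borel X = distr M lborel X"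
    by (rule distr_cong) auto
  also have "\<dots> = density lborel (\<lambda>x. ennreal (f x))"
    using X_distr by (simp add: distributed_def)
  finally have X_density: "distr M borel X = density lborel (\<lambda>x. ennreal (f x))" .
  have "real_distribution (density lborel (\<lambda>x. ennreal (f x)))"
    using X_distr unfolding X_density[symmetric]
    by (intro P.real_distribution_distr) (auto simp: distributed_def)
  then interpret real_density f
    using f_meas by (rule real_density.intro)
  have F_density: "F = cdf D"
    by (simp add: F_def X_density)
  define I where
    "I = (\<integral>\<^sup>+u\<in>{0<..<1}. ennreal (u powr \<alpha> * (1 - u) powr \<beta> / f (quantile F u)) \<partial>lborel)"
  have "cigf F \<alpha> \<beta> = enn2real I"
    using f_pos dom unfolding I_def F_density by (rule cigf_eq_integral_quantile)
  moreover have
    "P.expectation (\<lambda>\<omega>. 1 / f (quantile F (Y \<omega>))) = enn2real I / Beta (\<alpha> + 1) (\<beta> + 1)"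
    using P.expectation_beta_distributed[OF Y_distr, of "\<lambda>u. 1 / f (quantile F u)"]
      \<open>\<alpha> > -1\<close> \<open>\<beta> > -1\<close> f_meas borel_measurable_quantile f_nonneg
    by (simp add: I_def F_density)
  moreover have "0 < Beta (\<alpha> + 1) (\<beta> + 1)"
    using \<open>\<alpha> > -1\<close> \<open>\<beta> > -1\<close> by (simp add: Beta_def Gamma_real_pos)
  ultimately show ?thesis
    by simp
qed

end
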